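(* Let $f:\mathbb{R}^n\to\mathbb{R}$ be differentiable and pseudo-convex, with $\nabla f$ $L$-Lipschitz continuous ($L>0$), and assume the stationary set $X^*$ is non-empty. Let $0<h<\frac{1}{L}$ and $\beta\in\left(\frac{1-\sqrt{1-h^2L^2}}{h^2L^2},1\right]$, and let $\{x^k\},\{z^k\}$ be generated by Algorithm 1 from an arbitrary $x^0\in\mathbb{R}^n$. Then for every $x^*\in X^*$ and every $k\ge 0$, $$\|x^{k+1}-x^*\|^2\le \|x^k-x^*\|^2-\kappa_1\|x^k-z^k\|^2,$$ where $\kappa_1=2\beta-1-\beta^2h^2L^2>0$.
   Context: A differentiable $f$ is pseudo-convex if $\nabla f$ is pseudo-monotone, i.e. for all $x,y$, $\langle \nabla f(x),y-x\rangle\ge 0$ implies $\langle \nabla f(y),y-x\rangle\ge0$. The stationary set is $X^*=\{x\in\mathbb{R}^n:\nabla f(x)=0\}$. Algorithm 1: given $x^0$, for $k=0,1,2,\dots$ set $z^k=x^k-h\nabla f(x^k)$ and $x^{k+1}=x^k-h\big(\nabla f(x^k)-\beta(\nabla f(x^k)-\nabla f(z^k))\big)$. *)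

theory Defs
  imports "HOL-Analysis.Analysis"
begin

definition has_gradient_everywhere :: "('a::euclidean_space \<Rightarrow> real) \<Rightarrow> ('a \<Rightarrow> 'a) \<Rightarrow> bool" where
  "has_gradient_everywhere f grad \<longleftrightarrow> (\<forall>x. (f has_derivative (\<lambda>v. grad x \<bullet> v)) (at x))"

definition pseudo_monotone :: "('a::real_inner \<Rightarrow> 'a) \<Rightarrow> bool" where
  "pseudo_monotone F \<longleftrightarrow> (\<forall>x y. F x \<bullet> (y - x) \<ge> 0 \<longrightarrow> F y \<bullet> (y - x) \<ge> 0)"

definition pseudo_convex :: "('a::euclidean_space \<Rightarrow> real) \<Rightarrow> ('a \<Rightarrow> 'a) \<Rightarrow> bool" where
  "pseudo_convex f grad \<longleftrightarrow> has_gradient_everywhere f grad \<and> pseudo_monotone grad"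

definition stationary_set :: "('a \<Rightarrow> 'a::real_vector) \<Rightarrow> 'a set" where
  "stationary_set grad = {x. grad x = 0}"

end

theory Submission
  imports Defs
begin

text \<open>Since \<open>\<nabla>f(x\<^sup>*) = 0\<close>, pseudo-monotonicity gives \<open>\<langle>\<nabla>f(y), y - x\<^sup>*\<rangle> \<ge> 0\<close> for every \<open>y\<close>,
  in particular at \<open>y = x\<^sup>k\<close> and \<open>y = z\<^sup>k\<close>. Expanding \<open>\<parallel>x\<^sup>k\<^sup>+\<^sup>1 - x\<^sup>*\<parallel>\<^sup>2\<close> and dropping these two
  nonnegative terms (weighted by \<open>1 - \<beta>\<close> and \<open>\<beta>\<close>), the only error left is
  \<open>\<beta>\<^sup>2h\<^sup>2\<parallel>\<nabla>f(x\<^sup>k) - \<nabla>f(z\<^sup>k)\<parallel>\<^sup>2 \<le> \<beta>\<^sup>2h\<^sup>2L\<^sup>2\<parallel>x\<^sup>k - z\<^sup>k\<parallel>\<^sup>2\<close> by the Lipschitz bound. The lower bound on \<open>\<beta>\<close>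
  is exactly the condition that \<open>\<beta>\<close> lies between the roots of \<open>2\<beta> - 1 - \<beta>\<^sup>2h\<^sup>2L\<^sup>2\<close>.\<close>

lemma pseudo_monotone_inner_nonneg_at_zero:
  assumes "pseudo_monotone F" and "F xs = 0"
  shows "F y \<bullet> (y - xs) \<ge> 0"
  using assms unfolding pseudo_monotone_def by (metis inner_zero_left order_refl)

text \<open>With \<open>d = x - x\<^sup>*\<close>, \<open>r = h\<nabla>f(x)\<close> and \<open>q = h\<nabla>f(z)\<close>, the new iterate is \<open>x\<^sup>* + d - r + \<beta>(r - q)\<close>.\<close>

lemma norm_relaxed_step_le:
  fixes d r q :: "'a::real_inner" and \<beta> c :: real
  assumes q_nonneg: "q \<bullet> (d - r) \<ge> 0" and r_nonneg: "r \<bullet> d \<ge> 0"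
    and lip: "norm (r - q)^2 \<le> c * norm r^2"
    and "0 \<le> \<beta>" "\<beta> \<le> 1"
  shows "norm (d - r + \<beta> *\<^sub>R (r - q))^2 \<le> norm d^2 - (2*\<beta> - 1 - \<beta>^2 * c) * norm r^2"
proof -
  have expand: "norm (d - r + \<beta> *\<^sub>R (r - q))^2
      = norm d^2 - 2 * (r \<bullet> d) + norm r^2
        + 2*\<beta> * (r \<bullet> d - norm r^2 - q \<bullet> (d - r)) + \<beta>^2 * norm (r - q)^2"
    unfolding power2_norm_eq_inner
    by (simp add: inner_simps algebra_simps power2_eq_square inner_commute)
  have "\<beta> * (q \<bullet> (d - r)) \<ge> 0" "(1 - \<beta>) * (r \<bullet> d) \<ge> 0"
    using assms by simp_all
  moreover have "\<beta>^2 * norm (r - q)^2 \<le> \<beta>^2 * (c * norm r^2)"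
    using lip by (intro mult_left_mono) auto
  ultimately show ?thesis
    unfolding expand by (simp add: algebra_simps)
qed

lemma extragradient_step_norm_le:
  fixes F :: "'a::real_inner \<Rightarrow> 'a" and x z x' xs :: 'a
  assumes pm: "pseudo_monotone F" and stat: "F xs = 0"
    and z_def: "z = x - h *\<^sub>R F x"
    and x'_def: "x' = x - h *\<^sub>R (F x - \<beta> *\<^sub>R (F x - F z))"
    and lip: "norm (F x - F z) \<le> L * norm (x - z)"
    and "0 \<le> h" "0 \<le> \<beta>" "\<beta> \<le> 1"
  shows "norm (x' - xs)^2 \<le> norm (x - xs)^2 - (2*\<beta> - 1 - \<beta>^2 * h^2 * L^2) * norm (x - z)^2"
proof -
  define d r q where "d = x - xs" and "r = h *\<^sub>R F x" and "q = h *\<^sub>R F z"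
  have xz: "x - z = r" and zxs: "z - xs = d - r"
    unfolding d_def r_def z_def by simp_all
  have q_nonneg: "q \<bullet> (d - r) \<ge> 0"
    using pseudo_monotone_inner_nonneg_at_zero[OF pm stat, of z] \<open>0 \<le> h\<close>
    unfolding q_def zxs[symmetric] by simp
  have r_nonneg: "r \<bullet> d \<ge> 0"
    using pseudo_monotone_inner_nonneg_at_zero[OF pm stat, of x] \<open>0 \<le> h\<close>
    unfolding r_def d_def by simp
  have "norm (r - q) = h * norm (F x - F z)"
    unfolding r_def q_def using \<open>0 \<le> h\<close> by (simp add: scaleR_diff_right[symmetric])
  also have "\<dots> \<le> h * L * norm r"
    using lip \<open>0 \<le> h\<close> unfolding xz by (simp add: mult_left_mono mult.assoc)
  finally have "norm (r - q)^2 \<le> (h^2 * L^2) * norm r^2"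
    by (metis norm_ge_zero power_mono power_mult_distrib)
  note step = norm_relaxed_step_le[OF q_nonneg r_nonneg this \<open>0 \<le> \<beta>\<close> \<open>\<beta> \<le> 1\<close>]
  have x'_eq: "x' - xs = d - r + \<beta> *\<^sub>R (r - q)"
    unfolding x'_def d_def r_def q_def by (simp add: algebra_simps)
  show ?thesis
    using step[folded x'_eq] unfolding xz d_def by (simp add: mult.assoc)
qed

lemma relaxation_coeff_pos:
  fixes a \<beta> :: real
  assumes "0 < a" "a < 1" and lo: "(1 - sqrt (1 - a)) / a < \<beta>" and "\<beta> \<le> 1"
  shows "0 < \<beta>" and "0 < 2*\<beta> - 1 - \<beta>^2 * a"
proof -
  define s where "s = sqrt (1 - a)"
  have "0 < s" "s < 1" "s^2 = 1 - a"
    unfolding s_def using assms by auto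
  have lo': "1 - s < a * \<beta>"
    using lo \<open>0 < a\<close> unfolding s_def by (simp add: field_simps)
  then show "0 < \<beta>"
    using \<open>s < 1\<close> \<open>0 < a\<close> by (metis diff_gt_0_iff_gt order.strict_trans zero_less_mult_pos)
  have "a * (2*\<beta> - 1 - \<beta>^2 * a) = (a*\<beta> - (1 - s)) * ((1 + s) - a*\<beta>)"
    using \<open>s^2 = 1 - a\<close> by (simp add: algebra_simps power2_eq_square)
  also have "\<dots> > 0"
  proof (intro mult_pos_pos)
    have "a * \<beta> \<le> a"
      using \<open>\<beta> \<le> 1\<close> \<open>0 < a\<close> by simp
    then show "0 < (1 + s) - a*\<beta>"
      using \<open>0 < s\<close> \<open>a < 1\<close> by linarith
  qed (use lo' in simp)
  finally show "0 < 2*\<beta> - 1 - \<beta>^2 * a"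
    using \<open>0 < a\<close> by (simp add: zero_less_mult_iff)
qed

theorem proposition1:
  fixes f :: "real^'n \<Rightarrow> real" and grad :: "real^'n \<Rightarrow> real^'n"
    and L h \<beta> :: real and x z :: "nat \<Rightarrow> real^'n"
  assumes grad: "has_gradient_everywhere f grad"
    and pc: "pseudo_convex f grad"
    and L_pos: "L > 0"
    and lip: "\<And>u v. norm (grad u - grad v) \<le> L * norm (u - v)"
    and nonempty: "stationary_set grad \<noteq> {}"
    and h_pos: "0 < h" and h_lt: "h < 1 / L"
    and beta_lo: "(1 - sqrt (1 - h^2 * L^2)) / (h^2 * L^2) < \<beta>" and beta_hi: "\<beta> \<le> 1"
    and z_def: "\<And>k. z k = x k - h *\<^sub>R grad (x k)"
    and x_rec: "\<And>k. x (Suc k) = x k - h *\<^sub>R (grad (x k) - \<beta> *\<^sub>R (grad (x k) - grad (z k)))"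
  shows "2 * \<beta> - 1 - \<beta>^2 * h^2 * L^2 > 0 \<and>
    (\<forall>xs \<in> stationary_set grad. \<forall>k.
      (norm (x (Suc k) - xs))^2 \<le> (norm (x k - xs))^2
        - (2 * \<beta> - 1 - \<beta>^2 * h^2 * L^2) * (norm (x k - z k))^2)"
proof -
  have "h * L < 1"
    using h_lt L_pos by (simp add: field_simps)
  then have "0 < h^2 * L^2" "h^2 * L^2 < 1"
    using h_pos L_pos by (simp_all add: power_mult_distrib[symmetric] power_less_one_iff)
  note coeff = relaxation_coeff_pos[OF this beta_lo beta_hi]
  have pm: "pseudo_monotone grad"
    using pc unfolding pseudo_convex_def by simp
  have "norm (x (Suc k) - xs)^2 \<le> norm (x k - xs)^2
      - (2*\<beta> - 1 - \<beta>^2 * h^2 * L^2) * norm (x k - z k)^2"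
    if "xs \<in> stationary_set grad" for xs k
    using that coeff(1) h_pos beta_hi
    by (intro extragradient_step_norm_le[OF pm _ z_def x_rec lip])
       (simp_all add: stationary_set_def)
  then show ?thesis
    using coeff(2) by (simp add: mult.assoc)
qed

end
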